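(* Let $\mathcal{Q}$ be a finite poset equipped with the discrete $\sigma$-algebra (all subsets). Then the map \[ \psi\colon \mu\longmapsto \int_{\mathcal{Q}}\dim(-)\,d\mu \] from the set of measures on the discrete $\sigma$-algebra of $\mathcal{Q}$ to the set of additive amplitudes on $\mathrm{Vect}^{\mathcal{Q}}$ is a bijection. That is, for every additive amplitude $\alpha$ on $\mathrm{Vect}^{\mathcal{Q}}$ there is a unique measure $\mu$ on $\mathcal{Q}$ with $\alpha(M)=\int_{\mathcal{Q}}\dim M(q)\,d\mu(q)$ for all $M$.
   Context: $\mathrm{Vect}$ is the category of finite-dimensional vector spaces over a fixed field, and $\mathrm{Vect}^{\mathcal{Q}}$ is the (abelian) category of functors $\mathcal{Q}\to\mathrm{Vect}$ (persistence modules), with $\mathcal{Q}$ viewed as a category. For an abelian category $\mathcal{A}$, an amplitude is a function $\alpha\colon\operatorname{ob}\mathcal{A}\to[0,\infty]$ with $\alpha(0)=0$ such that for every short exact sequence $0\to A\to B\to C\to 0$, $\alpha(A)\le\alpha(B)$, $\alpha(C)\le\alpha(B)$ and $\alpha(B)\le\alpha(A)+\alpha(C)$; it is additive if always $\alpha(B)=\alpha(A)+\alpha(C)$. *)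

theory Defs
  imports "HOL-Analysis.Nonnegative_Lebesgue_Integration" "Jordan_Normal_Form.Matrix"
begin

text \<open>Concrete model of the functor category Vect^Q over a field 'k:
  a persistence module assigns to each q the space 'k^(d q) and to each
  relation q \<le> r a (d r) x (d q) matrix, functorially. For incomparable
  pairs the matrix slot is normalised to the zero matrix.\<close>

definition is_pmod :: "('q::order \<Rightarrow> nat) \<times> ('q \<Rightarrow> 'q \<Rightarrow> 'k::field mat) \<Rightarrow> bool" where
  "is_pmod = (\<lambda>(d, m).
      (\<forall>q r. q \<le> r \<longrightarrow> m q r \<in> carrier_mat (d r) (d q)) \<and>
      (\<forall>q r. \<not> q \<le> r \<longrightarrow> m q r = 0\<^sub>m (d r) (d q)) \<and>
      (\<forall>q. m q q = 1\<^sub>m (d q)) \<and>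
      (\<forall>q r s. q \<le> r \<longrightarrow> r \<le> s \<longrightarrow> m q s = m r s * m q r))"

typedef (overloaded) ('q, 'k) pmod =
  "{M :: ('q::order \<Rightarrow> nat) \<times> ('q \<Rightarrow> 'q \<Rightarrow> 'k::field mat). is_pmod M}"
  by (rule exI[of _ "(\<lambda>_. 0, \<lambda>_ _. 0\<^sub>m 0 0)"]) (auto simp: is_pmod_def)

definition pdim :: "('q::order, 'k::field) pmod \<Rightarrow> 'q \<Rightarrow> nat" where
  "pdim M = fst (Rep_pmod M)"

definition pmap :: "('q::order, 'k::field) pmod \<Rightarrow> 'q \<Rightarrow> 'q \<Rightarrow> 'k mat" where
  "pmap M = snd (Rep_pmod M)"

definition is_morph :: "('q::order, 'k::field) pmod \<Rightarrow> ('q, 'k) pmod \<Rightarrow> ('q \<Rightarrow> 'k mat) \<Rightarrow> bool" where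
  "is_morph M N f \<longleftrightarrow>
     (\<forall>q. f q \<in> carrier_mat (pdim N q) (pdim M q)) \<and>
     (\<forall>q r. q \<le> r \<longrightarrow> pmap N q r * f q = f r * pmap M q r)"

text \<open>Short exact sequences 0 \<rightarrow> A \<rightarrow> B \<rightarrow> C \<rightarrow> 0 (exactness is pointwise in the functor category).\<close>
definition short_exact :: "('q::order, 'k::field) pmod \<Rightarrow> ('q, 'k) pmod \<Rightarrow> ('q, 'k) pmod \<Rightarrow> bool" where
  "short_exact A B C \<longleftrightarrow> (\<exists>f g. is_morph A B f \<and> is_morph B C g \<and>
     (\<forall>q.
       (\<forall>u \<in> carrier_vec (pdim A q). f q *\<^sub>v u = 0\<^sub>v (pdim B q) \<longrightarrow> u = 0\<^sub>v (pdim A q)) \<and>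
       (\<forall>v \<in> carrier_vec (pdim B q). g q *\<^sub>v v = 0\<^sub>v (pdim C q) \<longleftrightarrow>
            (\<exists>u \<in> carrier_vec (pdim A q). f q *\<^sub>v u = v)) \<and>
       (\<forall>w \<in> carrier_vec (pdim C q). \<exists>v \<in> carrier_vec (pdim B q). g q *\<^sub>v v = w)))"

definition zero_pmod :: "('q::order, 'k::field) pmod" where
  "zero_pmod = Abs_pmod (\<lambda>_. 0, \<lambda>_ _. 0\<^sub>m 0 0)"

definition amplitude :: "(('q::order, 'k::field) pmod \<Rightarrow> ennreal) \<Rightarrow> bool" where
  "amplitude \<alpha> \<longleftrightarrow> \<alpha> zero_pmod = 0 \<and>
     (\<forall>A B C. short_exact A B C \<longrightarrow> \<alpha> A \<le> \<alpha> B \<and> \<alpha> C \<le> \<alpha> B \<and> \<alpha> B \<le> \<alpha> A + \<alpha> C)"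

definition additive_amplitude :: "(('q::order, 'k::field) pmod \<Rightarrow> ennreal) \<Rightarrow> bool" where
  "additive_amplitude \<alpha> \<longleftrightarrow> amplitude \<alpha> \<and>
     (\<forall>A B C. short_exact A B C \<longrightarrow> \<alpha> B = \<alpha> A + \<alpha> C)"

definition discrete_measure :: "'q measure \<Rightarrow> bool" where
  "discrete_measure \<mu> \<longleftrightarrow> space \<mu> = UNIV \<and> sets \<mu> = Pow UNIV"

definition psi :: "'q measure \<Rightarrow> ('q::order, 'k::field) pmod \<Rightarrow> ennreal" where
  "psi \<mu> = (\<lambda>M. \<integral>\<^sup>+ q. of_nat (pdim M q) \<partial>\<mu>)"

end

(* An additive amplitude is determined by its values on the one-dimensional point modules k_q.
   If q0 is a maximal point of the support of M, the first basis vector of M(q0) spans a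
   submodule isomorphic to k_q0 (maximality makes it stable under the structure maps), and the
   quotient has total dimension one less; induction therefore gives
   alpha(M) = sum_q alpha(k_q) dim M(q), which is psi of the measure with point masses alpha(k_q).
   Conversely psi(mu) is additive because dimensions add along short exact sequences
   (rank-nullity), and psi(mu)(k_q) = mu{q} makes psi injective. *)

theory Submission
  imports Defs "Jordan_Normal_Form.VS_Connect"
begin

unbundle no vec_syntax

section \<open>Short exact sequences of matrices\<close>

definition mat_short_exact :: "nat \<Rightarrow> nat \<Rightarrow> nat \<Rightarrow> 'k::field mat \<Rightarrow> 'k mat \<Rightarrow> bool" where
  "mat_short_exact na nb nc F G \<longleftrightarrow>
     (\<forall>u \<in> carrier_vec na. F *\<^sub>v u = 0\<^sub>v nb \<longrightarrow> u = 0\<^sub>v na) \<and>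
     (\<forall>v \<in> carrier_vec nb. G *\<^sub>v v = 0\<^sub>v nc \<longleftrightarrow> (\<exists>u \<in> carrier_vec na. F *\<^sub>v u = v)) \<and>
     (\<forall>w \<in> carrier_vec nc. \<exists>v \<in> carrier_vec nb. G *\<^sub>v v = w)"

lemma short_exact_iff_mat_short_exact:
  "short_exact A B C \<longleftrightarrow> (\<exists>f g. is_morph A B f \<and> is_morph B C g \<and>
     (\<forall>q. mat_short_exact (pdim A q) (pdim B q) (pdim C q) (f q) (g q)))"
  unfolding short_exact_def mat_short_exact_def ..

lemma linear_map_mult_mat_vec:
  assumes "A \<in> carrier_mat n m"
  shows "linear_map class_ring (module_vec TYPE('k::field) m) (module_vec TYPE('k) n) (\<lambda>v. A *\<^sub>v v)"
  unfolding linear_map_def mod_hom_def mod_hom_axioms_def module_hom_def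
  using vec_vs[of m] vec_vs[of n] assms
  by (auto simp: vectorspace_def module_vec_simps mult_add_distrib_mat_vec mult_mat_vec)

lemma mat_short_exact_dim:
  fixes F :: "'k::field mat"
  assumes F: "F \<in> carrier_mat nb na" and G: "G \<in> carrier_mat nc nb"
    and exact: "mat_short_exact na nb nc F G"
  shows "nb = na + nc"
proof -
  interpret F: linear_map class_ring "module_vec TYPE('k) na" "module_vec TYPE('k) nb" "\<lambda>v. F *\<^sub>v v"
    using F by (rule linear_map_mult_mat_vec)
  interpret G: linear_map class_ring "module_vec TYPE('k) nb" "module_vec TYPE('k) nc" "\<lambda>v. G *\<^sub>v v"
    using G by (rule linear_map_mult_mat_vec)
  have "F.kerT = {\<zero>\<^bsub>module_vec TYPE('k) na\<^esub>}"
    using exact F unfolding mat_short_exact_def F.ker_def by (auto simp: module_vec_simps)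
  then have "vectorspace.dim class_ring ((module_vec TYPE('k) na)\<lparr>carrier := F.kerT\<rparr>) = 0"
    by (intro F.inj_imp_dim_ker0 F.Ke0_imp_inj) simp
  moreover have "G.kerT = F.imT"
    using exact F G unfolding mat_short_exact_def G.ker_def F.im_def by (auto simp: module_vec_simps)
  moreover have "(module_vec TYPE('k) nc)\<lparr>carrier := G.imT\<rparr> = module_vec TYPE('k) nc"
    using exact G unfolding mat_short_exact_def G.im_def by (auto simp: module_vec_simps module_vec_def)
  moreover have "vectorspace.dim class_ring ((module_vec TYPE('k) nb)\<lparr>carrier := F.imT\<rparr>) +
      vectorspace.dim class_ring ((module_vec TYPE('k) na)\<lparr>carrier := F.kerT\<rparr>) = na"
    using F.rank_nullity[OF vec_space.fin_dim] vec_space.dim_is_n by metis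
  moreover have "vectorspace.dim class_ring ((module_vec TYPE('k) nc)\<lparr>carrier := G.imT\<rparr>) +
      vectorspace.dim class_ring ((module_vec TYPE('k) nb)\<lparr>carrier := G.kerT\<rparr>) = nb"
    using G.rank_nullity[OF vec_space.fin_dim] vec_space.dim_is_n by metis
  ultimately show ?thesis
    using vec_space.dim_is_n[where 'a = 'k] by simp
qed

lemma carrier_vec_0_eq: "u \<in> carrier_vec 0 \<Longrightarrow> u = 0\<^sub>v 0"
  by (auto intro: eq_vecI)

lemma mat_short_exact_zero_one: "mat_short_exact 0 n n (0\<^sub>m n 0 :: 'k::field mat) (1\<^sub>m n)"
proof -
  have "0\<^sub>m n 0 *\<^sub>v u = 0\<^sub>v n" if "u \<in> carrier_vec 0" for u :: "'k vec"
    using that by (auto simp: scalar_prod_def intro: eq_vecI)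
  then show ?thesis
    unfolding mat_short_exact_def by (auto simp: carrier_vec_0_eq intro!: exI[of _ "0\<^sub>v 0"])
qed

definition first_unit_mat :: "nat \<Rightarrow> 'k::field mat" where
  "first_unit_mat d = mat d 1 (\<lambda>(i, j). if i = 0 then 1 else 0)"

definition drop_first_mat :: "nat \<Rightarrow> 'k::field mat" where
  "drop_first_mat d = mat (d - 1) d (\<lambda>(i, j). if j = Suc i then 1 else 0)"

lemma drop_first_mat_carrier: "drop_first_mat d \<in> carrier_mat (d - 1) d"
  by (simp add: drop_first_mat_def)

lemma first_unit_mat_mult_vec:
  "u \<in> carrier_vec 1 \<Longrightarrow> first_unit_mat d *\<^sub>v u = vec d (\<lambda>i. if i = 0 then u $ 0 else 0)"
  by (auto simp: first_unit_mat_def scalar_prod_def intro: eq_vecI)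

lemma drop_first_mat_mult_vec:
  fixes v :: "'k::field vec"
  assumes "v \<in> carrier_vec d"
  shows "drop_first_mat d *\<^sub>v v = vec (d - 1) (\<lambda>i. v $ Suc i)"
proof -
  have "(if P then 1 else 0) * x = (if P then x else 0)" for P and x :: 'k
    by simp
  with assms show ?thesis
    by (intro eq_vecI) (auto simp: drop_first_mat_def scalar_prod_def cong: if_cong)
qed

lemma mat_short_exact_first_unit_drop_first:
  assumes "0 < d"
  shows "mat_short_exact 1 d (d - 1) (first_unit_mat d :: 'k::field mat) (drop_first_mat d)"
  unfolding mat_short_exact_def
proof (intro conjI ballI impI iffI)
  fix u :: "'k vec" assume "u \<in> carrier_vec 1" "first_unit_mat d *\<^sub>v u = 0\<^sub>v d"
  then show "u = 0\<^sub>v 1"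
    using assms by (auto simp: first_unit_mat_mult_vec intro!: eq_vecI dest!: arg_cong[of _ _ "\<lambda>v. v $ 0"])
next
  fix v :: "'k vec" assume v: "v \<in> carrier_vec d" and "drop_first_mat d *\<^sub>v v = 0\<^sub>v (d - 1)"
  then have "(drop_first_mat d *\<^sub>v v) $ (i - 1) = 0" if "0 < i" "i < d" for i
    using that by simp
  with v have "v $ i = 0" if "0 < i" "i < d" for i
    using that by (cases i) (auto simp: drop_first_mat_mult_vec)
  with v have "first_unit_mat d *\<^sub>v vec 1 (\<lambda>_. v $ 0) = v"
    by (auto simp: first_unit_mat_mult_vec intro: eq_vecI)
  then show "\<exists>u \<in> carrier_vec 1. first_unit_mat d *\<^sub>v u = v"
    by (intro bexI[OF _ vec_carrier])
next
  fix v :: "'k vec" assume "v \<in> carrier_vec d" "\<exists>u \<in> carrier_vec 1. first_unit_mat d *\<^sub>v u = v"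
  then show "drop_first_mat d *\<^sub>v v = 0\<^sub>v (d - 1)"
    by (auto simp: first_unit_mat_mult_vec drop_first_mat_mult_vec intro!: eq_vecI)
next
  fix w :: "'k vec" assume "w \<in> carrier_vec (d - 1)"
  then have "drop_first_mat d *\<^sub>v vec d (\<lambda>i. if i = 0 then 0 else w $ (i - 1)) = w"
    by (auto simp: drop_first_mat_mult_vec intro: eq_vecI)
  then show "\<exists>v \<in> carrier_vec d. drop_first_mat d *\<^sub>v v = w"
    by (intro bexI[OF _ vec_carrier])
qed

lemma mat_eq_if_dim_zero:
  assumes "A \<in> carrier_mat m n" "B \<in> carrier_mat m n" "m = 0 \<or> n = 0"
  shows "A = B"
  using assms by (auto intro: eq_matI)

lemma is_pmod_pdim_pmap: "is_pmod (pdim M, pmap M)"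
  using Rep_pmod[of M] by (simp add: pdim_def pmap_def)

lemma pmap_not_le: "\<not> q \<le> r \<Longrightarrow> pmap M q r = 0\<^sub>m (pdim M r) (pdim M q)"
  using is_pmod_pdim_pmap[of M] unfolding is_pmod_def prod.case by blast

lemma pmap_carrier_mat: "pmap M q r \<in> carrier_mat (pdim M r) (pdim M q)"
proof (cases "q \<le> r")
  case True
  then show ?thesis using is_pmod_pdim_pmap[of M] unfolding is_pmod_def prod.case by blast
qed (simp add: pmap_not_le)

lemma pmap_refl: "pmap M q q = 1\<^sub>m (pdim M q)"
  using is_pmod_pdim_pmap[of M] unfolding is_pmod_def prod.case by blast

lemma pmap_trans: "q \<le> r \<Longrightarrow> r \<le> s \<Longrightarrow> pmap M q s = pmap M r s * pmap M q r"
  using is_pmod_pdim_pmap[of M] unfolding is_pmod_def prod.case by blast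

lemma pmod_eqI: "pdim M = pdim N \<Longrightarrow> pmap M = pmap N \<Longrightarrow> M = N"
  by (simp add: Rep_pmod_inject[symmetric] pdim_def pmap_def prod_eq_iff)

lemma pmap_refl_commute:
  "f \<in> carrier_mat (pdim N q) (pdim M q) \<Longrightarrow> pmap N q q * f = f * pmap M q q"
  by (simp add: pmap_refl)

lemma
  assumes "is_pmod (d, m)"
  shows pdim_Abs_pmod: "pdim (Abs_pmod (d, m)) = d"
    and pmap_Abs_pmod: "pmap (Abs_pmod (d, m)) = m"
  using assms by (simp_all add: pdim_def pmap_def Abs_pmod_inverse)

lemma is_pmod_zero: "is_pmod (\<lambda>_. 0, \<lambda>_ _. 0\<^sub>m 0 0)"
  by (auto simp: is_pmod_def)

lemma pdim_zero_pmod [simp]: "pdim zero_pmod = (\<lambda>_. 0)"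
  unfolding zero_pmod_def by (rule pdim_Abs_pmod[OF is_pmod_zero])

lemma pdim_eq_0_imp_zero_pmod:
  assumes "\<And>q. pdim M q = 0"
  shows "M = zero_pmod"
proof -
  have "pmap M = pmap zero_pmod"
    unfolding zero_pmod_def pmap_Abs_pmod[OF is_pmod_zero]
    using pmap_carrier_mat[of M] assms by (intro ext mat_eq_if_dim_zero[where m = 0 and n = 0]) auto
  with assms show ?thesis
    by (intro pmod_eqI) auto
qed

lemma short_exact_pdim:
  assumes "short_exact A B C"
  shows "pdim B q = pdim A q + pdim C q"
proof -
  obtain f g where "is_morph A B f" "is_morph B C g"
    and "mat_short_exact (pdim A q) (pdim B q) (pdim C q) (f q) (g q)"
    using assms unfolding short_exact_iff_mat_short_exact by blast
  then show ?thesis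
    unfolding is_morph_def by (blast intro: mat_short_exact_dim)
qed

lemma additive_amplitudeI:
  assumes "\<alpha> zero_pmod = 0" and "\<And>A B C. short_exact A B C \<Longrightarrow> \<alpha> B = \<alpha> A + \<alpha> C"
  shows "additive_amplitude \<alpha>"
  using assms unfolding additive_amplitude_def amplitude_def
  by (simp add: add_increasing add_increasing2)

lemma measurable_discrete_measure: "discrete_measure \<mu> \<Longrightarrow> f \<in> borel_measurable \<mu>"
  unfolding discrete_measure_def by (auto simp: measurable_def)

lemma psi_eq_sum:
  fixes \<mu> :: "'q::{finite, order} measure"
  assumes "discrete_measure \<mu>"
  shows "psi \<mu> M = (\<Sum>q\<in>UNIV. emeasure \<mu> {q} * of_nat (pdim M q))"
proof -
  have "psi \<mu> M = (\<integral>\<^sup>+ x. (\<Sum>q\<in>UNIV. of_nat (pdim M q) * indicator {q} x) \<partial>\<mu>)"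
    unfolding psi_def by (intro nn_integral_cong) (simp add: indicator_def)
  also have "\<dots> = (\<Sum>q\<in>UNIV. \<integral>\<^sup>+ x. of_nat (pdim M q) * indicator {q} x \<partial>\<mu>)"
    using assms by (intro nn_integral_sum) (auto intro: measurable_discrete_measure)
  also have "\<dots> = (\<Sum>q\<in>UNIV. emeasure \<mu> {q} * of_nat (pdim M q))"
    using assms by (auto simp: discrete_measure_def mult.commute intro!: sum.cong nn_integral_cmult_indicator)
  finally show ?thesis .
qed

lemma additive_amplitude_psi:
  fixes \<mu> :: "'q::{finite, order} measure"
  assumes "discrete_measure \<mu>"
  shows "additive_amplitude (psi \<mu> :: ('q, 'k::field) pmod \<Rightarrow> ennreal)"
  by (intro additive_amplitudeI)
    (simp_all add: psi_eq_sum[OF assms] short_exact_pdim sum.distrib distrib_left)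

section \<open>Point modules\<close>

definition point_dim :: "'q \<Rightarrow> 'q \<Rightarrow> nat" where
  "point_dim q0 q = (if q = q0 then 1 else 0)"

lemma sum_mult_point_dim:
  fixes f :: "'q::finite \<Rightarrow> 'a::semiring_1"
  shows "(\<Sum>q\<in>UNIV. f q * of_nat (point_dim q0 q)) = f q0"
proof -
  have "f q * of_nat (point_dim q0 q) = (if q = q0 then f q else 0)" for q
    by (simp add: point_dim_def)
  then show ?thesis
    by simp
qed

definition point_map :: "'q \<Rightarrow> 'q \<Rightarrow> 'q \<Rightarrow> 'k::field mat" where
  "point_map q0 q r = (if q = q0 \<and> r = q0 then 1\<^sub>m 1 else 0\<^sub>m (point_dim q0 r) (point_dim q0 q))"

definition point_pmod :: "'q::order \<Rightarrow> ('q, 'k::field) pmod" where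
  "point_pmod q0 = Abs_pmod (point_dim q0, point_map q0)"

lemma point_map_carrier: "point_map q0 q r \<in> carrier_mat (point_dim q0 r) (point_dim q0 q)"
  by (auto simp: point_map_def point_dim_def)

lemma is_pmod_point: "is_pmod (point_dim q0, point_map q0 :: 'q::order \<Rightarrow> 'q \<Rightarrow> 'k::field mat)"
  unfolding is_pmod_def prod.case
proof (intro conjI allI impI point_map_carrier)
  fix q r s :: 'q assume qr: "q \<le> r" and rs: "r \<le> s"
  show "point_map q0 q s = point_map q0 r s * (point_map q0 q r :: 'k mat)"
  proof (cases "q = q0 \<and> r = q0 \<and> s = q0")
    case False
    with qr rs have "point_dim q0 s = 0 \<or> point_dim q0 q = 0"
      by (auto simp: point_dim_def dest: order.antisym)
    then show ?thesis
      by (rule mat_eq_if_dim_zero[OF point_map_carrier mult_carrier_mat[OF point_map_carrier point_map_carrier]])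
  qed (simp add: point_map_def)
qed (auto simp: point_map_def point_dim_def)

lemma pdim_point_pmod: "pdim (point_pmod q0) = point_dim q0"
  unfolding point_pmod_def by (rule pdim_Abs_pmod[OF is_pmod_point])

lemma psi_point_pmod:
  fixes \<mu> :: "'q::{finite, order} measure"
  assumes "discrete_measure \<mu>"
  shows "psi \<mu> (point_pmod q0 :: ('q, 'k::field) pmod) = emeasure \<mu> {q0}"
  unfolding psi_eq_sum[OF assms] pdim_point_pmod by (rule sum_mult_point_dim)

lemma inj_on_psi:
  "inj_on (psi :: 'q::{finite, order} measure \<Rightarrow> ('q, 'k::field) pmod \<Rightarrow> ennreal) {\<mu>. discrete_measure \<mu>}"
proof (rule inj_onI)
  fix \<mu> \<nu> :: "'q measure"
  assume \<mu>: "\<mu> \<in> {\<mu>. discrete_measure \<mu>}" and \<nu>: "\<nu> \<in> {\<mu>. discrete_measure \<mu>}"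
    and eq: "(psi \<mu> :: ('q, 'k) pmod \<Rightarrow> ennreal) = psi \<nu>"
  have "emeasure \<mu> {q} = emeasure \<nu> {q}" for q
    using psi_point_pmod[of \<mu> q, where 'k = 'k] psi_point_pmod[of \<nu> q, where 'k = 'k] \<mu> \<nu> eq by simp
  with \<mu> \<nu> show "\<mu> = \<nu>"
    by (intro measure_eqI_finite[where A = UNIV]) (auto simp: discrete_measure_def)
qed

section \<open>Quotient by a point module at a maximal point of the support\<close>

definition quot_dim :: "('q::order, 'k::field) pmod \<Rightarrow> 'q \<Rightarrow> 'q \<Rightarrow> nat" where
  "quot_dim M q0 = (pdim M)(q0 := pdim M q0 - 1)"

text \<open>Only meaningful when no point above q0 carries a nonzero space: the structure maps
  out of q0 are then zero anyway, so dropping the first coordinate at q0 is compatible with them.\<close>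

definition quot_map :: "('q::order, 'k::field) pmod \<Rightarrow> 'q \<Rightarrow> 'q \<Rightarrow> 'q \<Rightarrow> 'k mat" where
  "quot_map M q0 q r =
     (if q = q0 \<and> r = q0 then 1\<^sub>m (pdim M q0 - 1)
      else if r = q0 then drop_first_mat (pdim M q0) * pmap M q q0
      else if q = q0 then 0\<^sub>m (pdim M r) (pdim M q0 - 1)
      else pmap M q r)"

definition quot_pmod :: "('q::order, 'k::field) pmod \<Rightarrow> 'q \<Rightarrow> ('q, 'k) pmod" where
  "quot_pmod M q0 = Abs_pmod (quot_dim M q0, quot_map M q0)"

lemma quot_map_carrier: "quot_map M q0 q r \<in> carrier_mat (quot_dim M q0 r) (quot_dim M q0 q)"
  using mult_carrier_mat[OF drop_first_mat_carrier pmap_carrier_mat] pmap_carrier_mat[of M]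
  by (auto simp: quot_map_def quot_dim_def)

lemma is_pmod_quot:
  fixes M :: "('q::order, 'k::field) pmod"
  assumes max: "\<And>r. q0 < r \<Longrightarrow> pdim M r = 0"
  shows "is_pmod (quot_dim M q0, quot_map M q0)"
  unfolding is_pmod_def prod.case
proof (intro conjI allI impI quot_map_carrier)
  fix q r :: 'q assume "\<not> q \<le> r"
  then show "quot_map M q0 q r = 0\<^sub>m (quot_dim M q0 r) (quot_dim M q0 q)"
    using pmap_not_le[of q r M] right_mult_zero_mat[OF drop_first_mat_carrier]
    by (auto simp: quot_map_def quot_dim_def)
next
  fix q :: 'q
  show "quot_map M q0 q q = 1\<^sub>m (quot_dim M q0 q)"
    by (simp add: quot_map_def quot_dim_def pmap_refl)
next
  fix q r s :: 'q assume qr: "q \<le> r" and rs: "r \<le> s"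
  consider "q0 < s" "q = q0 \<or> r = q0" | "r = q0" "s = q0" | "q \<noteq> q0" "r \<noteq> q0" "s = q0"
    | "q \<noteq> q0" "r \<noteq> q0" "s \<noteq> q0"
    using qr rs by (metis order.antisym order.strict_iff_order order.trans)
  then show "quot_map M q0 q s = quot_map M q0 r s * quot_map M q0 q r"
  proof cases
    case 1
    then have "quot_dim M q0 s = 0"
      using max by (auto simp: quot_dim_def)
    then show ?thesis
      by (intro mat_eq_if_dim_zero[OF quot_map_carrier mult_carrier_mat[OF quot_map_carrier quot_map_carrier]]) simp
  next
    case 2
    then show ?thesis
      using left_mult_one_mat[OF quot_map_carrier, of M q0 q0] by (simp add: quot_map_def quot_dim_def)
  next
    case 3
    then show ?thesis
      using pmap_trans[OF qr rs, of M]
      by (simp add: quot_map_def assoc_mult_mat[OF drop_first_mat_carrier pmap_carrier_mat pmap_carrier_mat])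
  next
    case 4
    then show ?thesis
      using pmap_trans[OF qr rs, of M] by (simp add: quot_map_def)
  qed
qed

lemma
  fixes M :: "('q::order, 'k::field) pmod"
  assumes "\<And>r. q0 < r \<Longrightarrow> pdim M r = 0"
  shows pdim_quot_pmod: "pdim (quot_pmod M q0) = quot_dim M q0"
    and pmap_quot_pmod: "pmap (quot_pmod M q0) = quot_map M q0"
  unfolding quot_pmod_def using is_pmod_quot[OF assms]
  by (simp_all add: pdim_Abs_pmod pmap_Abs_pmod)

definition point_incl :: "('q::order, 'k::field) pmod \<Rightarrow> 'q \<Rightarrow> 'q \<Rightarrow> 'k mat" where
  "point_incl M q0 q = (if q = q0 then first_unit_mat (pdim M q0) else 0\<^sub>m (pdim M q) 0)"

definition quot_proj :: "('q::order, 'k::field) pmod \<Rightarrow> 'q \<Rightarrow> 'q \<Rightarrow> 'k mat" where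
  "quot_proj M q0 q = (if q = q0 then drop_first_mat (pdim M q0) else 1\<^sub>m (pdim M q))"

lemma is_morph_point_incl:
  fixes M :: "('q::order, 'k::field) pmod"
  assumes max: "\<And>r. q0 < r \<Longrightarrow> pdim M r = 0"
  shows "is_morph (point_pmod q0) M (point_incl M q0)"
  unfolding is_morph_def
proof (intro conjI allI impI)
  show incl: "point_incl M q0 q \<in> carrier_mat (pdim M q) (pdim (point_pmod q0) q)" for q
    by (simp add: point_incl_def pdim_point_pmod point_dim_def first_unit_mat_def)
  fix q r :: 'q assume "q \<le> r"
  show "pmap M q r * point_incl M q0 q = point_incl M q0 r * pmap (point_pmod q0) q r"
  proof (cases "q = r")
    case True
    then show ?thesis
      by (simp only: pmap_refl_commute[OF incl])
  next
    case False
    with \<open>q \<le> r\<close> max have "pdim M r = 0 \<or> pdim (point_pmod q0 :: ('q, 'k) pmod) q = 0"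
      by (auto simp: pdim_point_pmod point_dim_def order.strict_iff_order)
    then show ?thesis
      by (rule mat_eq_if_dim_zero[OF mult_carrier_mat[OF pmap_carrier_mat incl]
            mult_carrier_mat[OF incl pmap_carrier_mat]])
  qed
qed

lemma is_morph_quot_proj:
  fixes M :: "('q::order, 'k::field) pmod"
  assumes max: "\<And>r. q0 < r \<Longrightarrow> pdim M r = 0"
  shows "is_morph M (quot_pmod M q0) (quot_proj M q0)"
  unfolding is_morph_def
proof (intro conjI allI impI)
  show proj: "quot_proj M q0 q \<in> carrier_mat (pdim (quot_pmod M q0) q) (pdim M q)" for q
    by (simp add: quot_proj_def pdim_quot_pmod[OF max] quot_dim_def drop_first_mat_def)
  fix q r :: 'q assume "q \<le> r"
  consider "q = r" | "q0 < r" "q = q0" | "q \<noteq> r" "q \<noteq> q0"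
    using \<open>q \<le> r\<close> by (auto simp: order.strict_iff_order)
  then show "pmap (quot_pmod M q0) q r * quot_proj M q0 q = quot_proj M q0 r * pmap M q r"
  proof cases
    case 1
    then show ?thesis
      by (simp only: pmap_refl_commute[OF proj])
  next
    case 2
    then have "pdim (quot_pmod M q0) r = 0"
      using max by (simp add: pdim_quot_pmod[OF max] quot_dim_def)
    then show ?thesis
      by (intro mat_eq_if_dim_zero[OF mult_carrier_mat[OF pmap_carrier_mat proj]
            mult_carrier_mat[OF proj pmap_carrier_mat]]) simp
  next
    case 3
    then show ?thesis
      using pmap_carrier_mat[of M q r]
        right_mult_one_mat[OF mult_carrier_mat[OF drop_first_mat_carrier pmap_carrier_mat]]
      by (auto simp: pmap_quot_pmod[OF max] quot_map_def quot_proj_def)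
  qed
qed

lemma short_exact_point_quot:
  fixes M :: "('q::order, 'k::field) pmod"
  assumes max: "\<And>r. q0 < r \<Longrightarrow> pdim M r = 0" and pos: "0 < pdim M q0"
  shows "short_exact (point_pmod q0) M (quot_pmod M q0)"
  unfolding short_exact_iff_mat_short_exact
proof (intro exI conjI allI)
  show "is_morph (point_pmod q0) M (point_incl M q0)"
    using max by (rule is_morph_point_incl)
  show "is_morph M (quot_pmod M q0) (quot_proj M q0)"
    using max by (rule is_morph_quot_proj)
  show "mat_short_exact (pdim (point_pmod q0) q) (pdim M q) (pdim (quot_pmod M q0) q)
          (point_incl M q0 q) (quot_proj M q0 q)" for q
    using mat_short_exact_first_unit_drop_first[OF pos, where 'k = 'k] mat_short_exact_zero_one[where 'k = 'k]
    by (cases "q = q0")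
      (simp_all add: pdim_point_pmod point_dim_def pdim_quot_pmod[OF max] quot_dim_def point_incl_def quot_proj_def)
qed

lemma pdim_maximal_support:
  fixes M :: "('q::{finite, order}, 'k::field) pmod"
  assumes "pdim M q \<noteq> 0"
  shows "\<exists>q0. 0 < pdim M q0 \<and> (\<forall>r. q0 < r \<longrightarrow> pdim M r = 0)"
proof -
  have "\<exists>q0 \<in> {q. 0 < pdim M q}. \<forall>r \<in> {q. 0 < pdim M q}. q0 \<le> r \<longrightarrow> q0 = r"
    using assms by (intro finite_has_maximal) auto
  then show ?thesis
    by (metis gr0I less_imp_le less_irrefl mem_Collect_eq)
qed

lemma additive_amplitude_eq_sum:
  fixes \<alpha> :: "('q::{finite, order}, 'k::field) pmod \<Rightarrow> ennreal"
  assumes "additive_amplitude \<alpha>"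
  shows "\<alpha> M = (\<Sum>q\<in>UNIV. \<alpha> (point_pmod q) * of_nat (pdim M q))"
proof (induction "\<Sum>q\<in>UNIV. pdim M q" arbitrary: M rule: less_induct)
  case less
  show ?case
  proof (cases "\<forall>q. pdim M q = 0")
    case True
    then have "M = zero_pmod"
      by (intro pdim_eq_0_imp_zero_pmod) simp
    with True assms show ?thesis
      unfolding additive_amplitude_def amplitude_def by simp
  next
    case False
    then obtain q where "pdim M q \<noteq> 0"
      by blast
    then obtain q0 where pos: "0 < pdim M q0" and max: "\<And>r. q0 < r \<Longrightarrow> pdim M r = 0"
      using pdim_maximal_support by blast
    define C where "C = quot_pmod M q0"
    have exact: "short_exact (point_pmod q0) M C"
      unfolding C_def using max pos by (rule short_exact_point_quot)
    have dims: "pdim M q = point_dim q0 q + pdim C q" for q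
      using short_exact_pdim[OF exact] by (simp add: pdim_point_pmod)
    have "(\<Sum>q\<in>UNIV. pdim M q) = Suc (\<Sum>q\<in>UNIV. pdim C q)"
      by (simp add: dims sum.distrib point_dim_def)
    then have IH: "\<alpha> C = (\<Sum>q\<in>UNIV. \<alpha> (point_pmod q) * of_nat (pdim C q))"
      by (intro less) simp
    have "\<alpha> M = \<alpha> (point_pmod q0) + \<alpha> C"
      using assms exact unfolding additive_amplitude_def by blast
    also have "\<dots> = (\<Sum>q\<in>UNIV. \<alpha> (point_pmod q) * of_nat (point_dim q0 q)) + \<alpha> C"
      by (simp only: sum_mult_point_dim)
    also have "\<dots> = (\<Sum>q\<in>UNIV. \<alpha> (point_pmod q) * of_nat (pdim M q))"
      by (simp only: IH dims of_nat_add distrib_left sum.distrib)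
    finally show ?thesis .
  qed
qed

lemma discrete_measure_point_measure: "discrete_measure (point_measure UNIV f)"
  by (simp add: discrete_measure_def space_point_measure sets_point_measure)

lemma psi_point_measure:
  fixes \<alpha> :: "('q::{finite, order}, 'k::field) pmod \<Rightarrow> ennreal"
  assumes "additive_amplitude \<alpha>"
  shows "psi (point_measure UNIV (\<lambda>q. \<alpha> (point_pmod q))) = \<alpha>"
proof
  fix M :: "('q, 'k) pmod"
  have "emeasure (point_measure UNIV (\<lambda>q. \<alpha> (point_pmod q))) {q} = \<alpha> (point_pmod q)" for q :: 'q
    by (subst emeasure_point_measure_finite) auto
  then show "psi (point_measure UNIV (\<lambda>q. \<alpha> (point_pmod q))) M = \<alpha> M"
    unfolding psi_eq_sum[OF discrete_measure_point_measure]
    by (simp only: additive_amplitude_eq_sum[OF assms, of M])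
qed

theorem mainTheorem2:
  shows "bij_betw (psi :: 'q::{finite, order} measure \<Rightarrow> ('q, 'k::field) pmod \<Rightarrow> ennreal)
           {\<mu>. discrete_measure \<mu>} {\<alpha>. additive_amplitude \<alpha>}"
  unfolding bij_betw_def
proof (intro conjI inj_on_psi equalityI subsetI)
  show "\<alpha> \<in> {\<alpha>. additive_amplitude \<alpha>}" if "\<alpha> \<in> psi ` {\<mu>. discrete_measure \<mu>}"
    for \<alpha> :: "('q, 'k) pmod \<Rightarrow> ennreal"
    using that additive_amplitude_psi by auto
  show "\<alpha> \<in> psi ` {\<mu>. discrete_measure \<mu>}" if "\<alpha> \<in> {\<alpha>. additive_amplitude \<alpha>}"
    for \<alpha> :: "('q, 'k) pmod \<Rightarrow> ennreal"
  proof (rule image_eqI)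
    show "\<alpha> = psi (point_measure UNIV (\<lambda>q. \<alpha> (point_pmod q)))"
      using that by (simp add: psi_point_measure)
  qed (simp add: discrete_measure_point_measure)
qed

end
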